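(* For an integer $k\ge1$ and a structure function $s$ (as defined in the context) of a unit vector with at most $k$ nonzero entries, define $$ A(s) := \max_{1\le p \le k} p\, s^2(p),\qquad B(s) := \min_{1\le p \le k} \max\{p^2s^2(p),\ k\, s(p)\}. $$ Then: (i) for every such structure function $s$, $A(s)\le B(s)$; (ii) there exists a sequence of unit vectors $\mathbf{v}^{(k)}$, $k=1,2,\dots$, with $\mathbf{v}^{(k)}$ having at most $k$ nonzero entries and structure function $s_k$, such that $\lim_{k\to\infty} B(s_k)/A(s_k)=\infty$.
   Context: For a unit vector $\mathbf{v}\in\mathbb{R}^n$ with at most $k$ nonzero entries, let $v_{(1)}\ge v_{(2)}\ge\cdots$ be the absolute values of its entries sorted in decreasing order, and define its signal-energy structure function $s(p)=\big(\sum_{i=1}^p v_{(i)}^2\big)^{-1}$ for $1\le p\le k$. *)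

theory Defs
  imports Complex_Main
begin

text \<open>A vector in R^n is represented as a real list of length n.\<close>

definition unit_vec :: "real list \<Rightarrow> bool" where
  "unit_vec v \<longleftrightarrow> (\<Sum>x\<leftarrow>v. x ^ 2) = 1"

definition nnz :: "real list \<Rightarrow> nat" where
  "nnz v = length (filter (\<lambda>x. x \<noteq> 0) v)"

definition sorted_abs :: "real list \<Rightarrow> real list" where
  "sorted_abs v = rev (sort (map abs v))"

text \<open>(Entries beyond the dimension count as 0, i.e. R^n is padded.) Signal-energy structure function s(p) = (sum_{i=1}^p v_(i)^2)^(-1).\<close>
definition sfun :: "real list \<Rightarrow> nat \<Rightarrow> real" where
  "sfun v p = inverse (\<Sum>x\<leftarrow>take p (sorted_abs v). x ^ 2)"

definition A_val :: "nat \<Rightarrow> (nat \<Rightarrow> real) \<Rightarrow> real" where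
  "A_val k s = Max ((\<lambda>p. real p * (s p) ^ 2) ` {1..k})"

definition B_val :: "nat \<Rightarrow> (nat \<Rightarrow> real) \<Rightarrow> real" where
  "B_val k s = Min ((\<lambda>p. max ((real p) ^ 2 * (s p) ^ 2) (real k * s p)) ` {1..k})"

end

(*
  Let E(p) be the energy of the p largest entries, so that s = 1/E. The squared sorted
  entries decrease, hence so do the averages E(p)/p; together with E(k) = 1 and the
  monotonicity of E this gives p s(p)^2 <= k s(q) when q <= p and p s(p)^2 <= q^2 s(q)^2
  when p < q, so A(s) <= B(s).

  For the separation take n = floor(k^(1/4)) and a vector with one entry of energy 1/n
  followed by m = k div n entries sharing the remaining energy equally. Then A(s) <= 2k,
  while every term of B(s) is at least nk/8: a short prefix has E(p) <= 2/n, making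
  k s(p) >= nk/2, and a longer one has p s(p) >= m/2, whose square is at least nk/8.
*)
theory Submission
  imports Defs "HOL-Library.Multiset" "HOL-Library.Discrete_Functions"
begin

section \<open>Prefix sums of a nonincreasing sequence\<close>

lemma prefix_mean_antimono:
  fixes g :: "nat \<Rightarrow> real"
  assumes g: "antimono g" and "p \<le> q"
  shows "real p * (\<Sum>i<q. g i) \<le> real q * (\<Sum>i<p. g i)"
proof -
  have split: "(\<Sum>i<q. g i) = (\<Sum>i<p. g i) + (\<Sum>i\<in>{p..<q}. g i)"
    using \<open>p \<le> q\<close> by (metis atLeast0LessThan sum.atLeastLessThan_concat zero_le)
  have tail: "(\<Sum>i\<in>{p..<q}. g i) \<le> real (q - p) * g p"
    using sum_bounded_above[of "{p..<q}" g "g p"] antimonoD[OF g] by auto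
  have head: "real p * g p \<le> (\<Sum>i<p. g i)"
    using sum_bounded_below[of "{..<p}" "g p" g] antimonoD[OF g] by auto
  have "real p * (\<Sum>i<q. g i) \<le> real p * (\<Sum>i<p. g i) + real (q - p) * (real p * g p)"
    using tail by (simp add: split distrib_left mult.left_commute mult_left_mono)
  also have "\<dots> \<le> real p * (\<Sum>i<p. g i) + real (q - p) * (\<Sum>i<p. g i)"
    using head by (intro add_left_mono mult_left_mono) auto
  also have "\<dots> = real q * (\<Sum>i<p. g i)"
    using \<open>p \<le> q\<close> by (simp add: of_nat_diff algebra_simps)
  finally show ?thesis .
qed

lemma inverse_prefix_sum_bound:
  fixes g :: "nat \<Rightarrow> real"
  defines "S \<equiv> \<lambda>p. \<Sum>i<p. g i"
  assumes g: "antimono g" "\<And>i. 0 \<le> g i" and total: "S k = 1"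
    and p: "p \<in> {1..k}" and q: "q \<in> {1..k}"
  shows "real p * inverse (S p) ^ 2 \<le> max (real q ^ 2 * inverse (S q) ^ 2) (real k * inverse (S q))"
proof -
  have mean: "real i * S j \<le> real j * S i" if "i \<le> j" for i j
    using prefix_mean_antimono[OF g(1) that] by (simp add: S_def)
  have pos: "0 < S i" if "i \<in> {1..k}" for i
  proof -
    have "1 \<le> real k * S i"
      using mean[of i k] that total by simp
    then show ?thesis
      using zero_less_mult_pos[of "real k" "S i"] that by simp
  qed
  show ?thesis
  proof (cases "q \<le> p")
    case True
    have "S q \<le> S p"
      unfolding S_def using True g(2) by (intro sum_mono2) auto
    have "real p * inverse (S p) ^ 2 = (real p / S p) / S p"
      by (simp add: power2_eq_square field_simps)
    also have "\<dots> \<le> real k / S p"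
      using mean[of p k] p pos[OF p] total by (intro divide_right_mono) (auto simp: field_simps)
    also have "\<dots> \<le> real k / S q"
      using \<open>S q \<le> S p\<close> pos[OF q] by (intro divide_left_mono) auto
    finally show ?thesis by (simp add: field_simps)
  next
    case False
    have "inverse (S p) \<le> real q / (real p * S q)"
      using mean[of p q] False p pos[OF p] pos[OF q] by (simp add: field_simps)
    then have "real p * inverse (S p) ^ 2 \<le> real p * (real q / (real p * S q)) ^ 2"
      using pos[OF p] by (intro mult_left_mono power_mono) auto
    also have "\<dots> = real q ^ 2 * inverse (S q) ^ 2 / real p"
      using p by (simp add: power2_eq_square field_simps)
    also have "\<dots> \<le> real q ^ 2 * inverse (S q) ^ 2"
      using divide_left_mono[of 1 "real p" "real q ^ 2 * inverse (S q) ^ 2"] p by simp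
    finally show ?thesis by simp
  qed
qed

lemma A_val_le_B_val_prefix_sums:
  fixes g :: "nat \<Rightarrow> real"
  assumes "antimono g" "\<And>i. 0 \<le> g i" and total: "(\<Sum>i<k. g i) = 1"
  shows "A_val k (\<lambda>p. inverse (\<Sum>i<p. g i)) \<le> B_val k (\<lambda>p. inverse (\<Sum>i<p. g i))"
proof -
  have "{1..k} \<noteq> {}"
    using total by (cases k) auto
  then show ?thesis
    unfolding A_val_def B_val_def
    using inverse_prefix_sum_bound[OF assms] by (auto simp: Max_le_iff Min_ge_iff)
qed

section \<open>The energy profile of a vector\<close>

lemma length_sorted_abs [simp]: "length (sorted_abs v) = length v"
  by (simp add: sorted_abs_def)

lemma sorted_abs_nonneg: "x \<in> set (sorted_abs v) \<Longrightarrow> 0 \<le> x"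
  by (auto simp: sorted_abs_def)

lemma sorted_abs_nth_antimono:
  assumes "i \<le> j" "j < length v"
  shows "sorted_abs v ! j \<le> sorted_abs v ! i"
proof -
  have "sorted (rev (sorted_abs v))"
    by (simp add: sorted_abs_def)
  then have "rev (sorted_abs v) ! (length v - Suc j) \<le> rev (sorted_abs v) ! (length v - Suc i)"
    using assms by (intro sorted_nth_mono) auto
  then show ?thesis
    using assms by (simp add: rev_nth)
qed

lemma mset_sorted_abs: "mset (sorted_abs v) = image_mset abs (mset v)"
  by (simp add: sorted_abs_def)

lemma sum_list_sorted_abs:
  fixes f :: "real \<Rightarrow> 'a::comm_monoid_add"
  shows "(\<Sum>x\<leftarrow>sorted_abs v. f x) = (\<Sum>x\<leftarrow>v. f \<bar>x\<bar>)"
proof -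
  have "(\<Sum>x\<leftarrow>sorted_abs v. f x) = sum_mset (image_mset f (mset (sorted_abs v)))"
    by (simp flip: sum_mset_sum_list)
  also have "\<dots> = sum_mset (image_mset (\<lambda>x. f \<bar>x\<bar>) (mset v))"
    by (simp add: mset_sorted_abs image_mset.compositionality comp_def)
  also have "\<dots> = (\<Sum>x\<leftarrow>v. f \<bar>x\<bar>)"
    by (simp flip: sum_mset_sum_list)
  finally show ?thesis .
qed

lemma nnz_sorted_abs: "nnz (sorted_abs v) = nnz v"
proof -
  have "nnz (sorted_abs v) = size (filter_mset (\<lambda>x. x \<noteq> 0) (mset (sorted_abs v)))"
    by (simp add: nnz_def flip: mset_filter)
  also have "\<dots> = size (filter_mset (\<lambda>x. x \<noteq> 0) (mset v))"
    by (simp add: mset_sorted_abs filter_mset_image_mset comp_def)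
  also have "\<dots> = nnz v"
    by (simp add: nnz_def flip: mset_filter)
  finally show ?thesis .
qed

text \<open>Padded with zeros, so that prefix sums may run past the length of the vector.\<close>

definition energy :: "real list \<Rightarrow> nat \<Rightarrow> real" where
  "energy v i = (if i < length v then (sorted_abs v ! i) ^ 2 else 0)"

lemma energy_nonneg: "0 \<le> energy v i"
  by (simp add: energy_def)

lemma antimono_energy: "antimono (energy v)"
proof (rule antimonoI)
  fix i j :: nat
  assume "i \<le> j"
  show "energy v j \<le> energy v i"
  proof (cases "j < length v")
    case True
    then have "0 \<le> sorted_abs v ! j"
      by (intro sorted_abs_nonneg[of _ v] nth_mem) simp
    with True \<open>i \<le> j\<close> show ?thesis
      unfolding energy_def by (auto intro: power_mono sorted_abs_nth_antimono)
  qed (simp add: energy_def)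
qed

lemma sfun_eq_inverse_energy_sum: "sfun v p = inverse (\<Sum>i<p. energy v i)"
proof -
  have "(\<Sum>x\<leftarrow>take p (sorted_abs v). x ^ 2) = (\<Sum>i<min (length v) p. (sorted_abs v ! i) ^ 2)"
    by (simp add: sum_list_sum_nth atLeast0LessThan)
  also have "\<dots> = (\<Sum>i<p. energy v i)"
    unfolding energy_def by (rule sum.mono_neutral_cong_left) auto
  finally show ?thesis
    by (simp add: sfun_def)
qed

lemma energy_eq_0:
  assumes "nnz v \<le> i"
  shows "energy v i = 0"
proof (rule ccontr)
  let ?w = "sorted_abs v"
  assume "energy v i \<noteq> 0"
  then have i: "i < length v" and "?w ! i \<noteq> 0"
    by (auto simp: energy_def split: if_splits)
  then have "0 < ?w ! i"
    using sorted_abs_nonneg[of "?w ! i" v] by fastforce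
  \<comment> \<open>all entries up to position i are nonzero since the list is sorted\<close>
  then have "{..i} \<subseteq> {j. j < length ?w \<and> ?w ! j \<noteq> 0}"
    using i sorted_abs_nth_antimono[of _ i v] by fastforce
  then have "card {..i} \<le> card {j. j < length ?w \<and> ?w ! j \<noteq> 0}"
    by (intro card_mono) auto
  also have "\<dots> = nnz ?w"
    by (simp add: nnz_def length_filter_conv_card)
  finally show False
    using assms by (simp add: nnz_sorted_abs)
qed

lemma sum_energy:
  assumes "nnz v \<le> k"
  shows "(\<Sum>i<k. energy v i) = (\<Sum>x\<leftarrow>v. x ^ 2)"
proof -
  have "(\<Sum>i<k. energy v i) = (\<Sum>i<length v. energy v i)"
  proof (rule sum.mono_neutral_cong)
    show "energy v i = 0" if "i \<in> {..<length v} - {..<k}" for i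
      using that assms by (intro energy_eq_0) auto
    show "energy v i = 0" if "i \<in> {..<k} - {..<length v}" for i
      using that by (simp add: energy_def)
  qed auto
  also have "\<dots> = (\<Sum>x\<leftarrow>sorted_abs v. x ^ 2)"
    by (simp add: sum_list_sum_nth atLeast0LessThan energy_def)
  finally show ?thesis
    by (simp add: sum_list_sorted_abs)
qed

lemma A_val_le_B_val:
  assumes "unit_vec v" "nnz v \<le> k"
  shows "A_val k (sfun v) \<le> B_val k (sfun v)"
  using A_val_le_B_val_prefix_sums[OF antimono_energy energy_nonneg, of v k] assms
  by (simp add: sum_energy unit_vec_def sfun_eq_inverse_energy_sum[abs_def])

lemma real_le_A_val:
  assumes "unit_vec v" "nnz v \<le> k"
  shows "real k \<le> A_val k (sfun v)"
proof -
  have "sfun v k = 1"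
    using assms by (simp add: sfun_eq_inverse_energy_sum sum_energy unit_vec_def)
  then have "k \<in> {1..k}"
    by (cases k) (auto simp: sfun_def)
  then have "real k * sfun v k ^ 2 \<le> A_val k (sfun v)"
    unfolding A_val_def by (intro Max_ge) auto
  with \<open>sfun v k = 1\<close> show ?thesis
    by simp
qed

section \<open>Vectors with one spike on a flat background\<close>

definition spike :: "real \<Rightarrow> real \<Rightarrow> nat \<Rightarrow> real list" where
  "spike a b m = sqrt a # replicate m (sqrt b)"

lemma unit_vec_spike:
  assumes "0 \<le> a" "0 \<le> b" "a + real m * b = 1"
  shows "unit_vec (spike a b m)"
  using assms by (simp add: unit_vec_def spike_def sum_list_replicate)

lemma nnz_spike: "nnz (spike a b m) \<le> (if b = 0 then 1 else m + 1)"
  by (simp add: nnz_def spike_def filter_replicate)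

lemma sorted_abs_spike:
  assumes "0 \<le> b" "b \<le> a"
  shows "sorted_abs (spike a b m) = spike a b m"
proof -
  have "map abs (spike a b m) = spike a b m"
    using assms by (simp add: spike_def)
  then have "sorted_abs (spike a b m) = rev (sort (spike a b m))"
    by (simp only: sorted_abs_def)
  also have "sort (spike a b m) = replicate m (sqrt b) @ [sqrt a]"
    using assms by (intro properties_for_sort) (auto simp: spike_def sorted_append)
  finally show ?thesis
    by (simp add: spike_def)
qed

lemma sfun_spike:
  assumes "0 \<le> b" "b \<le> a" "1 \<le> p"
  shows "sfun (spike a b m) p = inverse (a + real (min (p - 1) m) * b)"
proof -
  obtain p' where "p = Suc p'"
    using \<open>1 \<le> p\<close> by (cases p) auto
  then show ?thesis
    unfolding sfun_def sorted_abs_spike[OF assms(1,2)]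
    using assms by (simp add: spike_def sum_list_replicate min_def)
qed

lemma A_val_spike_le:
  assumes b: "0 < b" "b \<le> a" and total: "a + real m * b = 1" and "1 \<le> k"
  shows "A_val k (sfun (spike a b m)) \<le> max (inverse (a * b)) (real k)"
proof -
  have "real p * sfun (spike a b m) p ^ 2 \<le> max (inverse (a * b)) (real k)"
    if p: "p \<in> {1..k}" for p
  proof (cases "p - 1 \<le> m")
    case True
    define S where "S = a + (real p - 1) * b"
    have sfun_p: "sfun (spike a b m) p = inverse S"
      using sfun_spike[of b a p m] True p b by (simp add: S_def of_nat_diff)
    have "a \<le> S" "real p * b \<le> S"
      using p b by (auto simp: S_def algebra_simps)
    then have "a * (real p * b) \<le> S ^ 2"
      using p b by (simp add: power2_eq_square mult_mono)
    then have "inverse (S ^ 2) \<le> inverse (a * (real p * b))"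
      using p b by (intro le_imp_inverse_le) auto
    then have "real p * inverse (S ^ 2) \<le> real p * inverse (a * (real p * b))"
      by (rule mult_left_mono) simp
    also have "\<dots> = inverse (a * b)"
      using p by (simp add: field_simps)
    finally show ?thesis
      by (simp add: sfun_p power_inverse)
  next
    case False
    then have "sfun (spike a b m) p = 1"
      using sfun_spike[of b a p m] p b total by (simp add: min_def)
    with p show ?thesis
      by (simp add: le_max_iff_disj)
  qed
  with \<open>1 \<le> k\<close> show ?thesis
    unfolding A_val_def by (auto simp: Max_le_iff)
qed

lemma B_val_spike_ge:
  assumes b: "0 < b" "b \<le> a" and total: "a + real m * b = 1" and "1 \<le> k"
  shows "min (real k / (2 * a)) (real m ^ 2 / 4) \<le> B_val k (sfun (spike a b m))"
proof -
  have "min (real k / (2 * a)) (real m ^ 2 / 4)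
      \<le> max (real q ^ 2 * sfun (spike a b m) q ^ 2) (real k * sfun (spike a b m) q)"
    if q: "q \<in> {1..k}" for q
  proof (cases "q - 1 \<le> m")
    case True
    define S where "S = a + (real q - 1) * b"
    have sfun_q: "sfun (spike a b m) q = inverse S"
      using sfun_spike[of b a q m] True q b by (simp add: S_def of_nat_diff)
    have "0 < S"
      using q b by (simp add: S_def add_pos_nonneg)
    consider "S \<le> 2 * a" | "S \<le> 2 * (real q * b)"
      using q b by (fastforce simp: S_def algebra_simps)
    then show ?thesis
    proof cases
      case 1
      then have "real k / (2 * a) \<le> real k / S"
        using \<open>0 < S\<close> by (intro divide_left_mono) auto
      then show ?thesis
        by (simp add: sfun_q field_simps)
    next
      case 2
      have "real m * b \<le> 1"
        using total b by simp
      then have "real m / 2 \<le> inverse (2 * b)"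
        using b by (simp add: field_simps)
      also have "\<dots> = real q / (2 * (real q * b))"
        using q by (simp add: inverse_eq_divide)
      also have "\<dots> \<le> real q / S"
        using 2 q b \<open>0 < S\<close> by (intro divide_left_mono) auto
      finally have "(real m / 2) ^ 2 \<le> (real q / S) ^ 2"
        by (intro power_mono) auto
      then show ?thesis
        by (simp add: sfun_q power_divide field_simps)
    qed
  next
    case False
    then have "sfun (spike a b m) q = 1"
      using sfun_spike[of b a q m] q b total by (simp add: min_def)
    moreover have "real m ^ 2 \<le> real q ^ 2"
      using False by (intro power_mono) auto
    then have "min (real k / (2 * a)) (real m ^ 2 / 4) \<le> real q ^ 2"
      using zero_le_power2[of "real m"] by (intro min.coboundedI2) linarith
    ultimately show ?thesis
      by (simp add: le_max_iff_disj)
  qed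
  with \<open>1 \<le> k\<close> show ?thesis
    unfolding B_val_def by (intro Min.boundedI) auto
qed

section \<open>The separating family\<close>

definition spike_vec :: "nat \<Rightarrow> nat \<Rightarrow> real list" where
  "spike_vec n k = spike (1 / real n) ((1 - 1 / real n) / real (k div n)) (k div n)"

lemma spike_vec_unit_sparse:
  assumes "1 \<le> n" "n \<le> k"
  shows "unit_vec (spike_vec n k)" "nnz (spike_vec n k) \<le> k"
proof -
  define m where "m = k div n"
  have "0 < m" "m * n \<le> k"
    using assms by (auto simp: m_def div_greater_zero_iff)
  then show "unit_vec (spike_vec n k)"
    unfolding spike_vec_def m_def[symmetric] using assms
    by (intro unit_vec_spike) (auto simp: field_simps)
  show "nnz (spike_vec n k) \<le> k"
  proof (cases "n = 1")
    case True
    then show ?thesis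
      using nnz_spike[of "1 / real n" 0 m] assms by (simp add: spike_vec_def m_def)
  next
    case False
    have "nnz (spike_vec n k) \<le> m + 1"
      unfolding spike_vec_def m_def[symmetric] by (rule order_trans[OF nnz_spike]) simp
    also have "\<dots> \<le> m * 2"
      using \<open>0 < m\<close> by simp
    also have "\<dots> \<le> m * n"
      using False assms by simp
    finally show ?thesis
      using \<open>m * n \<le> k\<close> by simp
  qed
qed

lemma div_bounds_of_pow4_le:
  fixes n k :: nat
  assumes "2 \<le> n" "n ^ 4 \<le> k"
  shows "n \<le> k div n" "n ^ 2 \<le> k div n" "k \<le> 2 * (k div n) * n"
proof -
  have "n ^ 2 \<le> n ^ 3"
    using assms by (intro power_increasing) auto
  also have "n ^ 3 = n ^ 4 div n"
  proof -
    have "n ^ 4 = n ^ 3 * n"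
      by (simp add: eval_nat_numeral algebra_simps)
    then show ?thesis
      using assms by simp
  qed
  also have "\<dots> \<le> k div n"
    using assms by (intro div_le_mono)
  finally show "n ^ 2 \<le> k div n" .
  then show "n \<le> k div n"
    using assms by (metis order_trans power2_eq_square le_square)
  have "k = k div n * n + k mod n"
    by simp
  also have "\<dots> \<le> k div n * n + k div n * n"
    using assms \<open>n \<le> k div n\<close> by (intro add_left_mono order_trans[OF less_imp_le[OF mod_less_divisor]]) auto
  finally show "k \<le> 2 * (k div n) * n"
    by simp
qed

lemma spike_vec_weights:
  assumes "2 \<le> n" "n \<le> m"
  shows "0 < (1 - 1 / real n) / real m" "(1 - 1 / real n) / real m \<le> 1 / real n"
    "1 / real n + real m * ((1 - 1 / real n) / real m) = 1"
proof -
  have "(1 - 1 / real n) / real m = (real n - 1) / (real n * real m)"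
    using assms by (simp add: field_simps)
  also have "\<dots> \<le> real m / (real n * real m)"
    using assms by (intro divide_right_mono) auto
  also have "\<dots> = 1 / real n"
    using assms by simp
  finally show "(1 - 1 / real n) / real m \<le> 1 / real n" .
  show "0 < (1 - 1 / real n) / real m" "1 / real n + real m * ((1 - 1 / real n) / real m) = 1"
    using assms by (simp_all add: field_simps)
qed

lemma spike_vec_A_val_le:
  assumes n: "2 \<le> n" and k: "n ^ 4 \<le> k"
  shows "A_val k (sfun (spike_vec n k)) \<le> 2 * real k"
proof -
  define m where "m = k div n"
  have "n \<le> m" "m * n \<le> k"
    using div_bounds_of_pow4_le(1)[OF assms] by (auto simp: m_def)
  have "1 \<le> k"
    using order_trans[OF one_le_power[of n 4] k] n by simp
  have "real n \<le> real m" "real m * real n \<le> real k"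
    using \<open>n \<le> m\<close> of_nat_mono[OF \<open>m * n \<le> k\<close>] by simp_all
  define a b where "a = 1 / real n" and "b = (1 - 1 / real n) / real m"
  have "inverse (a * b) = real n * (real n / (real n - 1)) * real m"
    using n \<open>real n \<le> real m\<close> by (simp add: a_def b_def field_simps)
  also have "\<dots> \<le> real n * 2 * real m"
  proof -
    have "real n / (real n - 1) \<le> 2"
      using n by (simp add: field_simps)
    then show ?thesis
      by (intro mult_right_mono mult_left_mono) auto
  qed
  also have "\<dots> \<le> 2 * real k"
    using \<open>real m * real n \<le> real k\<close> by (simp add: mult.commute)
  finally have "max (inverse (a * b)) (real k) \<le> 2 * real k"
    by simp
  with A_val_spike_le[OF spike_vec_weights[OF n \<open>n \<le> m\<close>] \<open>1 \<le> k\<close>] show ?thesis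
    by (simp add: spike_vec_def a_def b_def m_def)
qed

lemma spike_vec_B_val_ge:
  assumes n: "2 \<le> n" and k: "n ^ 4 \<le> k"
  shows "real n * real k / 8 \<le> B_val k (sfun (spike_vec n k))"
proof -
  define m where "m = k div n"
  have m: "n \<le> m" "n ^ 2 \<le> m" "k \<le> 2 * m * n"
    using div_bounds_of_pow4_le[OF assms] by (simp_all add: m_def)
  have "1 \<le> k"
    using order_trans[OF one_le_power[of n 4] k] n by simp
  have "n * k \<le> n * (2 * m * n)"
    using m(3) by simp
  also have "\<dots> = 2 * m * n ^ 2"
    by (simp add: power2_eq_square)
  also have "\<dots> \<le> 2 * m ^ 2"
    using m(2) by (simp add: power2_eq_square)
  finally have "real n * real k \<le> 2 * real m ^ 2"
    using of_nat_mono by fastforce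
  moreover have "real n * real k / 8 \<le> real k / (2 * (1 / real n))"
    by (simp add: mult.commute)
  ultimately have "real n * real k / 8 \<le> min (real k / (2 * (1 / real n))) (real m ^ 2 / 4)"
    by linarith
  also have "\<dots> \<le> B_val k (sfun (spike_vec n k))"
    using B_val_spike_ge[OF spike_vec_weights[OF n \<open>n \<le> m\<close>] \<open>1 \<le> k\<close>]
    by (simp add: spike_vec_def m_def)
  finally show ?thesis .
qed

lemma spike_vec_ratio_ge:
  assumes n: "2 \<le> n" and k: "n ^ 4 \<le> k"
  shows "real n / 16 \<le> B_val k (sfun (spike_vec n k)) / A_val k (sfun (spike_vec n k))"
proof -
  have "n \<le> k"
    using power_increasing[of 1 4 n] n k by simp
  then have "real k \<le> A_val k (sfun (spike_vec n k))"
    using n by (intro real_le_A_val spike_vec_unit_sparse) auto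
  have "0 < real k"
    using \<open>n \<le> k\<close> n by simp
  have "real n / 16 = (real n * real k / 8) / (2 * real k)"
    using \<open>0 < real k\<close> by simp
  also have "\<dots> \<le> B_val k (sfun (spike_vec n k)) / (2 * real k)"
    using spike_vec_B_val_ge[OF assms] \<open>0 < real k\<close> by (intro divide_right_mono) auto
  also have "\<dots> \<le> B_val k (sfun (spike_vec n k)) / A_val k (sfun (spike_vec n k))"
  proof (rule divide_left_mono)
    show "0 \<le> B_val k (sfun (spike_vec n k))"
      by (rule order_trans[OF _ spike_vec_B_val_ge[OF assms]]) simp
  qed (use spike_vec_A_val_le[OF assms] \<open>real k \<le> A_val k _\<close> \<open>0 < real k\<close> in auto)
  finally show ?thesis .
qed

definition floor_root4 :: "nat \<Rightarrow> nat" where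
  "floor_root4 k = floor_sqrt (floor_sqrt k)"

lemma le_floor_root4_iff: "n \<le> floor_root4 k \<longleftrightarrow> n ^ 4 \<le> k"
  by (simp add: floor_root4_def le_floor_sqrt_iff flip: power_mult)

lemma floor_root4_pow4_le: "floor_root4 k ^ 4 \<le> k"
  using le_floor_root4_iff[of "floor_root4 k" k] by simp

lemma floor_root4_le: "floor_root4 k \<le> k"
  unfolding floor_root4_def using floor_sqrt_le order_trans by blast

lemma filterlim_floor_root4: "filterlim floor_root4 at_top sequentially"
  by (auto simp: filterlim_at_top eventually_sequentially le_floor_root4_iff)

theorem theorem3:
  shows "(\<forall>(k::nat) (v::real list). k \<ge> 1 \<longrightarrow> unit_vec v \<longrightarrow> nnz v \<le> k \<longrightarrow>
            A_val k (sfun v) \<le> B_val k (sfun v))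
       \<and> (\<exists>V :: nat \<Rightarrow> real list.
            (\<forall>k\<ge>1. unit_vec (V k) \<and> nnz (V k) \<le> k) \<and>
            filterlim (\<lambda>k. B_val k (sfun (V k)) / A_val k (sfun (V k))) at_top sequentially)"
proof (intro conjI allI impI)
  show "A_val k (sfun v) \<le> B_val k (sfun v)" if "unit_vec v" "nnz v \<le> k" for k v
    using that by (rule A_val_le_B_val)
next
  let ?V = "\<lambda>k. spike_vec (floor_root4 k) k"
  have sparse: "unit_vec (?V k) \<and> nnz (?V k) \<le> k" if "1 \<le> k" for k
    using that spike_vec_unit_sparse floor_root4_le by (simp add: le_floor_root4_iff)
  have lim: "filterlim (\<lambda>k. real (floor_root4 k) * (1 / 16)) at_top sequentially"
    by (intro filterlim_at_top_mult_tendsto_pos[OF tendsto_const]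
        filterlim_compose[OF filterlim_real_sequentially filterlim_floor_root4]) simp
  have ratio: "\<forall>\<^sub>F k in sequentially. real (floor_root4 k) * (1 / 16)
      \<le> B_val k (sfun (?V k)) / A_val k (sfun (?V k))"
  proof (rule eventually_mono[OF eventually_ge_at_top[of "2 ^ 4"]])
    fix k :: nat
    assume "2 ^ 4 \<le> k"
    then have "2 \<le> floor_root4 k"
      by (simp add: le_floor_root4_iff)
    then have "real (floor_root4 k) / 16 \<le> B_val k (sfun (?V k)) / A_val k (sfun (?V k))"
      by (rule spike_vec_ratio_ge[OF _ floor_root4_pow4_le])
    then show "real (floor_root4 k) * (1 / 16) \<le> B_val k (sfun (?V k)) / A_val k (sfun (?V k))"
      by simp
  qed
  have "filterlim (\<lambda>k. B_val k (sfun (?V k)) / A_val k (sfun (?V k))) at_top sequentially"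
    by (rule filterlim_at_top_mono[OF lim ratio])
  with sparse show "\<exists>V. (\<forall>k\<ge>1. unit_vec (V k) \<and> nnz (V k) \<le> k) \<and>
      filterlim (\<lambda>k. B_val k (sfun (V k)) / A_val k (sfun (V k))) at_top sequentially"
    by (intro exI[of _ ?V] conjI allI impI) auto
qed

end
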